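(* The following holds for $x>0$ and integers $n,m$ with $n>m$: \begin{equation*} 0<-i\frac{P_n^m (ix)}{P_{n-1}^m (ix)}<\frac{n}{n-m}\left[x+\sqrt{1+x^2-\frac{m^2}{n^2}}\right],\quad n-m \mbox{ odd}, \end{equation*} \begin{equation*} \frac{1}{n-m}\left[nx+(n-1)\sqrt{1+x^2-\frac{m^2}{(n-1)^2}}\right]<-i\frac{P_n^m (ix)}{P_{n-1}^m (ix)},\quad n-m \mbox{ even}, \end{equation*} \begin{equation*} \frac{P_n^m (ix)^2}{P_{n-1}^m (ix) P_{n+1}^m (ix)}<1+\frac{1}{n-m},\quad n-m \mbox{ odd}. \end{equation*}
   Context: $P_n^m(z)$ denotes the associated Legendre function of the first kind of degree $n$ and order $m$ (as in the NIST Digital Library of Mathematical Functions, Chapter 14), evaluated at the imaginary argument $z=ix$ with $x>0$ (oblate Legendre functions); $i$ is the imaginary unit. *)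

theory Defs
  imports "HOL-Analysis.Analysis" "HOL-Computational_Algebra.Polynomial"
begin

definition legendre_poly :: "nat \<Rightarrow> complex poly" where
  "legendre_poly n = smult (1 / (2 ^ n * fact n)) ((pderiv ^^ n) ([:-1, 0, 1:] ^ n))"

text \<open>Associated Legendre function of the first kind P_n^m(z) for integer degree n and
  integer order m \<ge> 0 (DLMF 14.6.5, continued to the cut plane as in DLMF 14.21):
  P_n^m(z) = (z^2-1)^(m/2) d^m P_n(z)/dz^m, with (z^2-1)^(m/2) = (z+1)^(m/2)(z-1)^(m/2),
  principal branches.\<close>
definition assoc_legendreP :: "nat \<Rightarrow> nat \<Rightarrow> complex \<Rightarrow> complex" where
  "assoc_legendreP n m z =
     (csqrt (z + 1) * csqrt (z - 1)) ^ m * poly ((pderiv ^^ m) (legendre_poly n)) z"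

end

theory Submission
  imports Defs
begin

text \<open>Rodrigues' formula yields the classical recurrences for Legendre polynomials; differentiating the
  three-term recurrence m times and evaluating at \<open>i x\<close> shows that \<open>P\<^sub>m\<^sub>+\<^sub>k\<^sup>m(i x) = K i\<^sup>k q\<^sub>k(x)\<close>
  with a constant \<open>K \<noteq> 0\<close> and real polynomials \<open>q\<^sub>k\<close> satisfying
  \<open>(k+2) q\<^sub>k\<^sub>+\<^sub>2 = (2m+2k+3) x q\<^sub>k\<^sub>+\<^sub>1 + (2m+k+1) q\<^sub>k\<close>, so all \<open>q\<^sub>k(x)\<close> are positive for \<open>x > 0\<close>
  and the ratios in question are ratios of the \<open>q\<^sub>k\<close>.
  For even k the form \<open>Q = (k+1) q\<^sub>k\<^sub>+\<^sub>1\<^sup>2 - 2(m+k+1) x q\<^sub>k\<^sub>+\<^sub>1 q\<^sub>k - (2m+k+1) q\<^sub>k\<^sup>2\<close> is negative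
  for \<open>x \<ge> 0\<close>: the differential equations of the \<open>q\<^sub>k\<close> give
  \<open>((1+x\<^sup>2)\<^sup>m Q)' = -2(m+k+1)(1+x\<^sup>2)\<^sup>m q\<^sub>k\<^sub>+\<^sub>1 q\<^sub>k \<le> 0\<close>, and at \<open>x = 0\<close> the odd-index \<open>q\<^sub>k\<^sub>+\<^sub>1\<close>
  vanishes. Hence \<open>q\<^sub>k\<^sub>+\<^sub>1 / q\<^sub>k\<close> lies below the positive root of the associated quadratic, which is
  the upper bound; one more step of the recurrence turns it into the lower bound for
  \<open>q\<^sub>k\<^sub>+\<^sub>2 / q\<^sub>k\<^sub>+\<^sub>1\<close>, and comparing \<open>Q < 0\<close> with the recurrence gives the Turan-type bound.\<close>

text \<open>\<open>X_poly\<close> and \<open>X2_minus_1\<close> are constants rather than literals so that the simplifier does not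
  expand products with them coefficientwise.\<close>
definition X_poly :: "'a::comm_semiring_1 poly" where "X_poly = [:0, 1:]"

lemma poly_X_poly [simp]: "poly X_poly z = z"
  by (simp add: X_poly_def)

lemma pderiv_X_poly [simp]: "pderiv (X_poly :: 'a::idom poly) = 1"
  by (simp add: X_poly_def pderiv_pCons)

lemma pderiv_higher_pderiv: "pderiv ((pderiv ^^ k) p) = (pderiv ^^ Suc k) p"
  by simp

lemma higher_pderiv_of_nat_mult:
  "(pderiv ^^ k) (of_nat a * (p :: 'a::idom poly)) = of_nat a * (pderiv ^^ k) p"
  by (induction k) (auto simp: pderiv_mult)

lemma higher_pderiv_Suc_X_mult:
  "(pderiv ^^ Suc k) (X_poly * g :: 'a::idom poly)
     = X_poly * (pderiv ^^ Suc k) g + of_nat (Suc k) * (pderiv ^^ k) g"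
  by (induction k) (simp_all add: pderiv_add pderiv_mult algebra_simps)

lemma higher_pderiv_X_mult:
  "(pderiv ^^ k) (X_poly * g :: 'a::idom poly)
     = X_poly * (pderiv ^^ k) g + of_nat k * (pderiv ^^ (k - 1)) g"
  by (cases k) (simp_all only: higher_pderiv_Suc_X_mult, simp_all)

definition X2_minus_1 :: "'a::comm_ring_1 poly" where "X2_minus_1 = X_poly * X_poly - 1"

lemma X2_minus_1_eq: "X2_minus_1 = [:-1, 0, 1:]"
  by (simp add: X2_minus_1_def X_poly_def one_pCons)

lemma pderiv_X2_minus_1 [simp]: "pderiv (X2_minus_1 :: 'a::idom poly) = 2 * X_poly"
  by (simp add: X2_minus_1_def pderiv_diff pderiv_mult)

lemma higher_pderiv_Suc_Suc_X2_minus_1_mult: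
  "(pderiv ^^ Suc (Suc k)) (X2_minus_1 * g :: 'a::idom poly)
     = X2_minus_1 * (pderiv ^^ Suc (Suc k)) g
       + of_nat (2 * Suc (Suc k)) * (X_poly * (pderiv ^^ Suc k) g)
       + of_nat (Suc (Suc k) * Suc k) * (pderiv ^^ k) g"
proof (induction k)
  case (Suc k)
  show ?case
    by (subst funpow.simps(2), subst comp_apply, subst Suc)
      (simp add: pderiv_add pderiv_mult pderiv_higher_pderiv algebra_simps del: funpow.simps)
qed (simp add: pderiv_mult pderiv_add algebra_simps)

definition rodrigues_poly :: "nat \<Rightarrow> 'a::idom poly" where
  "rodrigues_poly n = (pderiv ^^ n) (X2_minus_1 ^ n)"

lemma rodrigues_poly_Suc_eq:
  "rodrigues_poly (Suc n) = of_nat (2 * Suc n)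
     * (X_poly * rodrigues_poly n + of_nat n * (pderiv ^^ (n - 1)) (X2_minus_1 ^ n))"
proof -
  have "pderiv (X2_minus_1 ^ Suc n :: 'a poly) = of_nat (2 * Suc n) * (X_poly * X2_minus_1 ^ n)"
    by (simp only: pderiv_power_Suc pderiv_X2_minus_1) (simp add: of_nat_mult_conv_smult smult_add_left algebra_simps)
  then show ?thesis
    unfolding rodrigues_poly_def funpow_Suc_right comp_apply
    by (simp only: higher_pderiv_of_nat_mult higher_pderiv_X_mult)
qed

lemma rodrigues_poly_Suc:
  "rodrigues_poly (Suc n) = of_nat (2 * Suc n) * X_poly * rodrigues_poly n
     + 2 * X2_minus_1 * pderiv (rodrigues_poly n)"
proof (cases n)
  case 0
  then show ?thesis by (simp add: rodrigues_poly_def pderiv_diff pderiv_mult)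
next
  case (Suc j)
  define S where "S = (pderiv ^^ j) (X2_minus_1 ^ Suc j :: 'a poly)"
  have R: "rodrigues_poly (Suc (Suc j))
      = of_nat (2 * Suc (Suc j)) * (X_poly * rodrigues_poly (Suc j) + of_nat (Suc j) * S)"
    using rodrigues_poly_Suc_eq[of "Suc j"] by (simp only: S_def diff_Suc_1)
  have "rodrigues_poly (Suc (Suc j)) = (pderiv ^^ Suc (Suc j)) (X2_minus_1 * X2_minus_1 ^ Suc j)"
    by (simp only: rodrigues_poly_def power_Suc)
  also have "\<dots> = X2_minus_1 * pderiv (rodrigues_poly (Suc j))
      + of_nat (2 * Suc (Suc j)) * (X_poly * rodrigues_poly (Suc j)) + of_nat (Suc (Suc j) * Suc j) * S"
    by (simp only: higher_pderiv_Suc_Suc_X2_minus_1_mult rodrigues_poly_def pderiv_higher_pderiv S_def)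
  finally have "X2_minus_1 * pderiv (rodrigues_poly (Suc j)) = of_nat (Suc (Suc j) * Suc j) * S"
    unfolding R by (simp add: algebra_simps)
  then show ?thesis
    unfolding Suc R mult.assoc by (simp add: algebra_simps)
qed

lemma pderiv_rodrigues_poly_Suc:
  "pderiv (rodrigues_poly (Suc n))
     = of_nat (2 * Suc n) * (of_nat (Suc n) * rodrigues_poly n + X_poly * pderiv (rodrigues_poly n))"
proof (cases n)
  case 0
  then show ?thesis by (simp add: rodrigues_poly_def pderiv_diff pderiv_mult)
next
  case (Suc j)
  have "pderiv ((pderiv ^^ j) (X2_minus_1 ^ Suc j)) = (rodrigues_poly (Suc j) :: 'a poly)"
    by (simp add: rodrigues_poly_def del: funpow.simps) (simp only: pderiv_higher_pderiv)
  then show ?thesis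
    unfolding Suc rodrigues_poly_Suc_eq[of "Suc j"] by (simp add: pderiv_mult pderiv_add algebra_simps)
qed

lemma higher_pderiv_degree:
  fixes p :: "'a::{idom, semiring_char_0} poly"
  shows "(pderiv ^^ degree p) p = [:fact (degree p) * lead_coeff p:]"
proof -
  have "degree ((pderiv ^^ degree p) p) = 0"
    by (simp add: degree_higher_pderiv)
  then show ?thesis
    by (subst degree_0_id[symmetric]) (simp_all add: coeff_higher_pderiv pochhammer_fact)
qed

lemma higher_pderiv_eq_0_if_degree_less:
  fixes p :: "'a::{idom, semiring_char_0} poly"
  assumes "degree p < m"
  shows "(pderiv ^^ m) p = 0"
proof -
  obtain k where m: "m = Suc k" using assms by (cases m) auto
  from assms have "degree ((pderiv ^^ k) p) = 0"
    by (simp add: degree_higher_pderiv m)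
  then show ?thesis by (simp add: m pderiv_eq_0_iff)
qed

lemma degree_rodrigues_poly: "degree (rodrigues_poly n :: 'a::{idom, ring_char_0} poly) = n"
proof -
  have "degree (X2_minus_1 :: 'a poly) = 2"
    by (simp add: X2_minus_1_eq)
  moreover have "(X2_minus_1 :: 'a poly) \<noteq> 0"
    using calculation by auto
  ultimately show ?thesis
    by (simp add: rodrigues_poly_def degree_higher_pderiv degree_power_eq)
qed

lemma rodrigues_poly_nonzero: "(rodrigues_poly n :: 'a::{idom, ring_char_0} poly) \<noteq> 0"
  using degree_rodrigues_poly[of n, where 'a='a] by (cases n) (auto simp: rodrigues_poly_def)

lemma legendre_poly_eq_rodrigues_poly:
  "legendre_poly n = smult (1 / (2 ^ n * fact n)) (rodrigues_poly n)"
  by (simp add: legendre_poly_def rodrigues_poly_def X2_minus_1_eq)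

lemma degree_legendre_poly: "degree (legendre_poly n) = n"
  by (simp add: legendre_poly_eq_rodrigues_poly degree_rodrigues_poly)

lemma legendre_poly_nonzero: "legendre_poly n \<noteq> 0"
  by (simp add: legendre_poly_eq_rodrigues_poly rodrigues_poly_nonzero)

lemma legendre_poly_0: "legendre_poly 0 = 1"
  by (simp add: legendre_poly_eq_rodrigues_poly rodrigues_poly_def)

lemma legendre_poly_1: "legendre_poly (Suc 0) = X_poly"
  by (simp add: legendre_poly_eq_rodrigues_poly rodrigues_poly_def numeral_poly
      mult_smult_left[symmetric])

lemma smult_legendre_scale_Suc:
  "smult (1 / (2 ^ Suc n * fact (Suc n))) (of_nat (2 * Suc n) * p)
     = smult (1 / (2 ^ n * fact n)) (p :: complex poly)"
proof -
  have "1 / (2 ^ Suc n * fact (Suc n)) * (2 * of_nat (Suc n)) = (1 / (2 ^ n * fact n) :: complex)"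
    by (simp add: field_simps del: of_nat_Suc)
  then have "1 / (2 ^ Suc n * fact (Suc n)) * of_nat (2 * Suc n) = (1 / (2 ^ n * fact n) :: complex)"
    by (simp only: of_nat_mult of_nat_numeral)
  then show ?thesis by (simp only: of_nat_mult_conv_smult smult_smult)
qed

lemma pderiv_legendre_poly_Suc:
  "pderiv (legendre_poly (Suc n)) = of_nat (Suc n) * legendre_poly n + X_poly * pderiv (legendre_poly n)"
  by (simp only: legendre_poly_eq_rodrigues_poly pderiv_smult pderiv_rodrigues_poly_Suc
      smult_legendre_scale_Suc) (simp add: pderiv_smult smult_add_right)

lemma legendre_poly_Suc:
  "of_nat (Suc n) * legendre_poly (Suc n)
     = of_nat (Suc n) * X_poly * legendre_poly n + X2_minus_1 * pderiv (legendre_poly n)"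
proof -
  have "of_nat (Suc n) * rodrigues_poly (Suc n)
      = of_nat (2 * Suc n) * (of_nat (Suc n) * X_poly * rodrigues_poly n
        + X2_minus_1 * pderiv (rodrigues_poly n) :: complex poly)"
    by (subst rodrigues_poly_Suc) (simp add: algebra_simps)
  then have "of_nat (Suc n) * legendre_poly (Suc n) = smult (1 / (2 ^ n * fact n))
      (of_nat (Suc n) * X_poly * rodrigues_poly n + X2_minus_1 * pderiv (rodrigues_poly n))"
    by (simp only: legendre_poly_eq_rodrigues_poly mult_smult_right smult_legendre_scale_Suc)
  then show ?thesis
    by (simp add: legendre_poly_eq_rodrigues_poly pderiv_smult smult_add_right)
qed

lemma X2_minus_1_mult_pderiv_legendre_poly_Suc:
  "X2_minus_1 * pderiv (legendre_poly (Suc n)) = of_nat (Suc n) * (X_poly * legendre_poly (Suc n) - legendre_poly n)"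
proof -
  have "X2_minus_1 * pderiv (legendre_poly (Suc n))
      = of_nat (Suc n) * X2_minus_1 * legendre_poly n + X_poly * (X2_minus_1 * pderiv (legendre_poly n))"
    by (simp add: pderiv_legendre_poly_Suc algebra_simps)
  also have "X2_minus_1 * pderiv (legendre_poly n)
      = of_nat (Suc n) * legendre_poly (Suc n) - of_nat (Suc n) * X_poly * legendre_poly n"
    using legendre_poly_Suc[of n] by (simp add: algebra_simps)
  finally show ?thesis by (simp add: X2_minus_1_def algebra_simps)
qed

lemma legendre_poly_Suc_Suc:
  "of_nat (Suc (Suc n)) * legendre_poly (Suc (Suc n))
     = of_nat (2 * n + 3) * X_poly * legendre_poly (Suc n) - of_nat (Suc n) * legendre_poly n"
  using legendre_poly_Suc[of "Suc n"] X2_minus_1_mult_pderiv_legendre_poly_Suc[of n]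
  by (simp add: algebra_simps)

lemma higher_pderiv_legendre_poly_Suc:
  "(pderiv ^^ Suc m) (legendre_poly (Suc n))
     = X_poly * (pderiv ^^ Suc m) (legendre_poly n) + of_nat (Suc n + m) * (pderiv ^^ m) (legendre_poly n)"
proof -
  have "(pderiv ^^ Suc m) (legendre_poly (Suc n))
      = (pderiv ^^ m) (of_nat (Suc n) * legendre_poly n + X_poly * pderiv (legendre_poly n))"
    by (simp only: funpow_Suc_right comp_apply pderiv_legendre_poly_Suc)
  also have "\<dots> = of_nat (Suc n) * (pderiv ^^ m) (legendre_poly n)
      + (X_poly * (pderiv ^^ m) (pderiv (legendre_poly n))
        + of_nat m * (pderiv ^^ (m - 1)) (pderiv (legendre_poly n)))"
    by (simp only: higher_pderiv_add higher_pderiv_of_nat_mult higher_pderiv_X_mult)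
  also have "(pderiv ^^ m) (pderiv (legendre_poly n)) = (pderiv ^^ Suc m) (legendre_poly n)"
    by (simp only: funpow_Suc_right comp_apply)
  also have "of_nat m * (pderiv ^^ (m - 1)) (pderiv (legendre_poly n)) = of_nat m * (pderiv ^^ m) (legendre_poly n)"
    by (cases m) (simp_all del: funpow.simps add: funpow_Suc_right)
  finally show ?thesis by (simp add: algebra_simps)
qed

lemma higher_pderiv_legendre_poly_Suc_Suc:
  "(of_nat (Suc (Suc n)) - of_nat m) * (pderiv ^^ m) (legendre_poly (Suc (Suc n)))
     = of_nat (2 * n + 3) * X_poly * (pderiv ^^ m) (legendre_poly (Suc n))
       - of_nat (Suc n + m) * (pderiv ^^ m) (legendre_poly n)"
proof (induction m arbitrary: n)
  case 0
  show ?case using legendre_poly_Suc_Suc[of n] by simp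
next
  case (Suc m)
  let ?D = "\<lambda>k j. (pderiv ^^ k) (legendre_poly j)"
  have "(of_nat (Suc (Suc n)) - of_nat m) * ?D (Suc m) (Suc (Suc n))
      = of_nat (2 * n + 3) * (?D m (Suc n) + X_poly * ?D (Suc m) (Suc n)) - of_nat (Suc n + m) * ?D (Suc m) n"
    using arg_cong[OF Suc.IH[of n], of pderiv]
    by (simp add: pderiv_mult pderiv_diff algebra_simps del: of_nat_Suc of_nat_add)
  moreover have "?D (Suc m) (Suc (Suc n)) = X_poly * ?D (Suc m) (Suc n) + of_nat (Suc (Suc n) + m) * ?D m (Suc n)"
    by (rule higher_pderiv_legendre_poly_Suc)
  ultimately have "of_nat (Suc n + m) * ((of_nat (Suc (Suc n)) - of_nat (Suc m)) * ?D (Suc m) (Suc (Suc n)))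
      = of_nat (Suc n + m)
        * (of_nat (2 * n + 3) * X_poly * ?D (Suc m) (Suc n) - of_nat (Suc n + Suc m) * ?D (Suc m) n)"
    by simp algebra
  then show ?case
    by (simp del: of_nat_Suc of_nat_add)
qed

text \<open>\<open>poly (oblate_poly m k) x\<close> is the m-th derivative of \<open>legendre_poly (m + k)\<close> at \<open>i x\<close>, divided
  by \<open>i\<^sup>k\<close> and by the constant m-th derivative of \<open>legendre_poly m\<close>: along the imaginary axis the
  m-times differentiated three-term recurrence becomes this real recurrence with positive coefficients.\<close>
fun oblate_poly :: "nat \<Rightarrow> nat \<Rightarrow> real poly" where
  "oblate_poly m 0 = 1"
| "oblate_poly m (Suc 0) = [:0, of_nat (2 * m + 1):]"
| "oblate_poly m (Suc (Suc k)) = smult (1 / of_nat (k + 2))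
     (smult (of_nat (2 * m + 2 * k + 3)) (X_poly * oblate_poly m (Suc k))
      + smult (of_nat (2 * m + k + 1)) (oblate_poly m k))"

declare oblate_poly.simps(3) [simp del]

lemma poly_oblate_poly_Suc_Suc:
  "poly (oblate_poly m (Suc (Suc k))) x
     = ((2 * m + 2 * k + 3) * x * poly (oblate_poly m (Suc k)) x + (2 * m + k + 1) * poly (oblate_poly m k) x) / (k + 2)"
  by (simp add: oblate_poly.simps(3) field_simps)

lemma poly_oblate_poly_recurrence:
  "(k + 2) * poly (oblate_poly m (Suc (Suc k))) x
     = (2 * m + 2 * k + 3) * x * poly (oblate_poly m (Suc k)) x + (2 * m + k + 1) * poly (oblate_poly m k) x"
  unfolding poly_oblate_poly_Suc_Suc by (simp add: field_simps)

lemma higher_pderiv_legendre_poly_Suc_self: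
  "(pderiv ^^ m) (legendre_poly (Suc m)) = of_nat (2 * m + 1) * X_poly * (pderiv ^^ m) (legendre_poly m)"
proof (cases m)
  case 0
  then show ?thesis by (simp add: legendre_poly_0 legendre_poly_1)
next
  case (Suc j)
  have "(pderiv ^^ m) (legendre_poly j) = 0"
    by (rule higher_pderiv_eq_0_if_degree_less) (simp add: degree_legendre_poly Suc)
  then show ?thesis
    using higher_pderiv_legendre_poly_Suc_Suc[where n=j and m=m] by (simp add: Suc)
qed

lemma higher_pderiv_legendre_poly_imag_axis:
  "poly ((pderiv ^^ m) (legendre_poly (m + k))) (\<i> * of_real x)
     = fact m * lead_coeff (legendre_poly m) * \<i> ^ k * of_real (poly (oblate_poly m k) x)"
proof (induction m k rule: oblate_poly.induct)
  case (1 m)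
  show ?case using higher_pderiv_degree[of "legendre_poly m"] by (simp add: degree_legendre_poly)
next
  case (2 m)
  show ?case
    using higher_pderiv_legendre_poly_Suc_self[of m] higher_pderiv_degree[of "legendre_poly m"]
    by (simp add: degree_legendre_poly algebra_simps)
next
  case (3 m k)
  let ?z = "\<i> * complex_of_real x"
  have "of_nat (k + 2) * poly ((pderiv ^^ m) (legendre_poly (m + Suc (Suc k)))) ?z
      = of_nat (2 * m + 2 * k + 3) * ?z * poly ((pderiv ^^ m) (legendre_poly (m + Suc k))) ?z
        - of_nat (2 * m + k + 1) * poly ((pderiv ^^ m) (legendre_poly (m + k))) ?z"
    using arg_cong[OF higher_pderiv_legendre_poly_Suc_Suc[where n="m + k" and m=m], of "\<lambda>p. poly p ?z"]
    by (simp add: algebra_simps)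
  then have "poly ((pderiv ^^ m) (legendre_poly (m + Suc (Suc k)))) ?z
      = (of_nat (2 * m + 2 * k + 3) * ?z * poly ((pderiv ^^ m) (legendre_poly (m + Suc k))) ?z
        - of_nat (2 * m + k + 1) * poly ((pderiv ^^ m) (legendre_poly (m + k))) ?z) / of_nat (k + 2)"
    by (simp add: field_simps del: of_nat_Suc of_nat_add)
  then show ?case
    unfolding 3 poly_oblate_poly_Suc_Suc by (simp add: field_simps)
qed

lemma oblate_poly_deriv:
  "(1 + x\<^sup>2) * poly (pderiv (oblate_poly m k)) x
     = (k + 1) * poly (oblate_poly m (Suc k)) x - (2 * m + k + 1) * x * poly (oblate_poly m k) x"
proof (induction m k rule: oblate_poly.induct)
  case (3 m k)
  let ?q = "\<lambda>j. poly (oblate_poly m j) x"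
  have "(1 + x\<^sup>2) * poly (pderiv (oblate_poly m (Suc (Suc k)))) x
      = ((2 * m + 2 * k + 3)
          * ((1 + x\<^sup>2) * ?q (Suc k) + x * ((1 + x\<^sup>2) * poly (pderiv (oblate_poly m (Suc k))) x))
        + (2 * m + k + 1) * ((1 + x\<^sup>2) * poly (pderiv (oblate_poly m k)) x)) / (k + 2)"
    by (simp add: oblate_poly.simps(3) pderiv_smult pderiv_add pderiv_mult field_simps)
  also have "\<dots> = ((2 * m + 2 * k + 3)
          * ((1 + x\<^sup>2) * ?q (Suc k) + x * ((k + 2) * ?q (Suc (Suc k)) - (2 * m + k + 2) * x * ?q (Suc k)))
        + (2 * m + k + 1) * ((k + 1) * ?q (Suc k) - (2 * m + k + 1) * x * ?q k)) / (k + 2)"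
    using 3 by (simp add: add.commute add.left_commute)
  also have "\<dots> = (Suc (Suc k) + 1) * ?q (Suc (Suc (Suc k))) - (2 * m + Suc (Suc k) + 1) * x * ?q (Suc (Suc k))"
  proof -
    note poly_oblate_poly_recurrence[where k=k and m=m and x=x]
      poly_oblate_poly_recurrence[where k="Suc k" and m=m and x=x]
    then show ?thesis by (simp add: field_simps power2_eq_square)
  qed
  finally show ?case by simp
qed (simp_all add: oblate_poly.simps(3) pderiv_pCons algebra_simps power2_eq_square)

lemma oblate_poly_Suc_deriv:
  "(1 + x\<^sup>2) * poly (pderiv (oblate_poly m (Suc k))) x
     = (k + 1) * x * poly (oblate_poly m (Suc k)) x + (2 * m + k + 1) * poly (oblate_poly m k) x"
  unfolding oblate_poly_deriv poly_oblate_poly_Suc_Suc by (simp add: field_simps)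

lemma oblate_poly_pos: "x > 0 \<Longrightarrow> poly (oblate_poly m k) x > 0"
  by (induction m k rule: oblate_poly.induct)
    (simp_all add: poly_oblate_poly_Suc_Suc add_pos_nonneg)

lemma oblate_poly_nonneg: "x \<ge> 0 \<Longrightarrow> poly (oblate_poly m k) x \<ge> 0"
  by (induction m k rule: oblate_poly.induct)
    (simp_all add: poly_oblate_poly_Suc_Suc)

lemma oblate_poly_at_0:
  "(even k \<longrightarrow> poly (oblate_poly m k) 0 > 0) \<and> (odd k \<longrightarrow> poly (oblate_poly m k) 0 = 0)"
  by (induction m k rule: oblate_poly.induct)
    (simp_all add: poly_oblate_poly_Suc_Suc)

definition oblate_form :: "nat \<Rightarrow> nat \<Rightarrow> real \<Rightarrow> real" where
  "oblate_form m k t = (k + 1) * (poly (oblate_poly m (Suc k)) t)\<^sup>2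
     - 2 * (m + k + 1) * t * poly (oblate_poly m (Suc k)) t * poly (oblate_poly m k) t
     - (2 * m + k + 1) * (poly (oblate_poly m k) t)\<^sup>2"

lemma oblate_form_deriv_identity:
  fixes m k :: nat and t u v a b :: real
  defines "u \<equiv> poly (oblate_poly m (Suc k)) t" and "v \<equiv> poly (oblate_poly m k) t"
    and "a \<equiv> poly (pderiv (oblate_poly m (Suc k))) t" and "b \<equiv> poly (pderiv (oblate_poly m k)) t"
  shows "2 * real m * t * oblate_form m k t
      + (1 + t\<^sup>2) * (2 * (real k + 1) * u * a - 2 * (real m + real k + 1) * (u * v + t * u * b + t * v * a)
        - 2 * (2 * real m + real k + 1) * v * b)
    = - 2 * (real m + real k + 1) * (1 + t\<^sup>2) * u * v"
proof -
  have "(1 + t\<^sup>2) * a = (real k + 1) * t * u + (2 * real m + real k + 1) * v"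
    using oblate_poly_Suc_deriv[where x=t and m=m and k=k] unfolding a_def u_def v_def by (simp add: algebra_simps)
  moreover have "(1 + t\<^sup>2) * b = (real k + 1) * u - (2 * real m + real k + 1) * t * v"
    using oblate_poly_deriv[where x=t and m=m and k=k] unfolding b_def u_def v_def by (simp add: algebra_simps)
  ultimately show ?thesis
    unfolding oblate_form_def u_def[symmetric] v_def[symmetric] by algebra
qed

lemma weighted_oblate_form_has_real_derivative:
  "((\<lambda>t. (1 + t\<^sup>2) ^ m * oblate_form m k t) has_real_derivative
      - 2 * (real m + real k + 1) * (1 + t\<^sup>2) ^ m * poly (oblate_poly m (Suc k)) t * poly (oblate_poly m k) t)
    (at t)"
proof -
  define u where "u = poly (oblate_poly m (Suc k)) t"
  define v where "v = poly (oblate_poly m k) t"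
  define a where "a = poly (pderiv (oblate_poly m (Suc k))) t"
  define b where "b = poly (pderiv (oblate_poly m k)) t"
  define Q' where "Q' = 2 * (real k + 1) * u * a - 2 * (real m + real k + 1) * (u * v + t * u * b + t * v * a)
    - 2 * (2 * real m + real k + 1) * v * b"
  define c where "c = m * (1 + t\<^sup>2) ^ (m - 1)"
  have "((\<lambda>t. (1 + t\<^sup>2) ^ m * oblate_form m k t) has_real_derivative
      c * (2 * t) * oblate_form m k t + (1 + t\<^sup>2) ^ m * Q') (at t)"
    unfolding oblate_form_def Q'_def u_def v_def a_def b_def c_def
    by (auto intro!: derivative_eq_intros simp: algebra_simps power2_eq_square)
  moreover have "c * (2 * t) * oblate_form m k t + (1 + t\<^sup>2) ^ m * Q'
      = - 2 * (m + k + 1) * (1 + t\<^sup>2) ^ m * u * v"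
  proof -
    have "(1 + t\<^sup>2) * (c * (2 * t) * oblate_form m k t + (1 + t\<^sup>2) ^ m * Q')
        = ((1 + t\<^sup>2) * c) * (2 * t) * oblate_form m k t + (1 + t\<^sup>2) ^ m * ((1 + t\<^sup>2) * Q')"
      by (simp add: algebra_simps)
    also have "(1 + t\<^sup>2) * c = m * (1 + t\<^sup>2) ^ m"
      unfolding c_def by (cases m) auto
    also have "m * (1 + t\<^sup>2) ^ m * (2 * t) * oblate_form m k t + (1 + t\<^sup>2) ^ m * ((1 + t\<^sup>2) * Q')
        = (1 + t\<^sup>2) ^ m * (2 * real m * t * oblate_form m k t + (1 + t\<^sup>2) * Q')"
      by (simp add: algebra_simps)
    also have "\<dots> = (1 + t\<^sup>2) * (- 2 * (m + k + 1) * (1 + t\<^sup>2) ^ m * u * v)"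
      unfolding Q'_def u_def v_def a_def b_def oblate_form_deriv_identity by (simp add: algebra_simps)
    moreover have "1 + t\<^sup>2 > 0"
      by (simp add: add_pos_nonneg)
    ultimately show ?thesis by simp
  qed
  ultimately show ?thesis unfolding u_def v_def by simp
qed

lemma oblate_form_neg:
  assumes "even k" and "x \<ge> 0"
  shows "oblate_form m k x < 0"
proof -
  let ?F = "\<lambda>t. (1 + t\<^sup>2) ^ m * oblate_form m k t"
  have "?F x \<le> ?F 0"
  proof (rule DERIV_nonpos_imp_nonincreasing[OF assms(2)])
    fix t :: real
    assume "0 \<le> t" "t \<le> x"
    then have "poly (oblate_poly m (Suc k)) t \<ge> 0" "poly (oblate_poly m k) t \<ge> 0"
      by (simp_all add: oblate_poly_nonneg)
    then have "- 2 * (real m + real k + 1) * (1 + t\<^sup>2) ^ m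
        * poly (oblate_poly m (Suc k)) t * poly (oblate_poly m k) t \<le> 0"
      by (intro mult_nonpos_nonneg) simp_all
    then show "\<exists>y. (?F has_real_derivative y) (at t) \<and> y \<le> 0"
      using weighted_oblate_form_has_real_derivative by (intro exI conjI)
  qed
  also have "?F 0 < 0"
    using oblate_poly_at_0[of k m] oblate_poly_at_0[of "Suc k" m] assms(1)
    by (simp add: oblate_form_def)
  finally have "(1 + x\<^sup>2) ^ m * oblate_form m k x < 0" .
  moreover have "(1 + x\<^sup>2) ^ m > (0 :: real)"
    by (simp add: add_pos_nonneg)
  ultimately show ?thesis
    by (meson mult_nonneg_nonneg less_imp_le not_le)
qed

lemma less_quadratic_root:
  fixes a b c r :: real
  assumes "a > 0" "c \<ge> 0" "a * r\<^sup>2 - 2 * b * r - c < 0"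
  shows "r < (b + sqrt (b\<^sup>2 + a * c)) / a"
proof (rule ccontr)
  have D: "b\<^sup>2 + a * c \<ge> 0"
    using assms(1,2) by simp
  assume "\<not> ?thesis"
  then have "sqrt (b\<^sup>2 + a * c) \<le> a * r - b"
    using assms(1) by (simp add: field_simps)
  then have "(sqrt (b\<^sup>2 + a * c))\<^sup>2 \<le> (a * r - b)\<^sup>2"
    using D by (intro power_mono) simp_all
  with D have "b\<^sup>2 + a * c \<le> (a * r - b)\<^sup>2"
    by simp
  then have "a * (a * r\<^sup>2 - 2 * b * r - c) \<ge> 0"
    by (simp add: algebra_simps power2_eq_square)
  with assms(1,3) show False
    using mult_pos_neg[of a "a * r\<^sup>2 - 2 * b * r - c"] by linarith
qed

lemma sqrt_oblate_discriminant:
  "real (m + k + 1) * sqrt (1 + x\<^sup>2 - (real m)\<^sup>2 / (real (m + k + 1))\<^sup>2)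
     = sqrt ((real (m + k + 1) * x)\<^sup>2 + (real k + 1) * (2 * real m + real k + 1))"
proof -
  have "(real (m + k + 1))\<^sup>2 \<noteq> 0"
    by simp
  then have "(real (m + k + 1))\<^sup>2 * (1 + x\<^sup>2 - (real m)\<^sup>2 / (real (m + k + 1))\<^sup>2)
      = (real (m + k + 1) * x)\<^sup>2 + ((real (m + k + 1))\<^sup>2 - (real m)\<^sup>2)"
    by (simp add: right_diff_distrib distrib_left power_mult_distrib)
  also have "(real (m + k + 1))\<^sup>2 - (real m)\<^sup>2 = (real k + 1) * (2 * real m + real k + 1)"
    by (simp add: power2_eq_square algebra_simps)
  finally have "(real (m + k + 1))\<^sup>2 * (1 + x\<^sup>2 - (real m)\<^sup>2 / (real (m + k + 1))\<^sup>2)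
      = (real (m + k + 1) * x)\<^sup>2 + (real k + 1) * (2 * real m + real k + 1)" .
  then show ?thesis
    by (metis abs_of_nonneg of_nat_0_le_iff real_sqrt_abs real_sqrt_mult)
qed

lemma oblate_ratio_less_root:
  assumes "x > 0" and "even k"
  shows "poly (oblate_poly m (Suc k)) x / poly (oblate_poly m k) x
     < (real (m + k + 1) * x + sqrt ((real (m + k + 1) * x)\<^sup>2 + (real k + 1) * (2 * real m + real k + 1)))
        / (real k + 1)"
proof -
  define u where "u = poly (oblate_poly m (Suc k)) x"
  define v where "v = poly (oblate_poly m k) x"
  have "v > 0"
    unfolding v_def using assms(1) by (rule oblate_poly_pos)
  have "v\<^sup>2 * ((real k + 1) * (u / v)\<^sup>2 - 2 * (real (m + k + 1) * x) * (u / v) - (2 * real m + real k + 1))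
      = oblate_form m k x"
    using \<open>v > 0\<close> by (simp add: oblate_form_def u_def v_def field_simps power2_eq_square)
  also have "\<dots> < 0"
    using assms by (intro oblate_form_neg) simp_all
  finally have "(real k + 1) * (u / v)\<^sup>2 - 2 * (real (m + k + 1) * x) * (u / v) - (2 * real m + real k + 1) < 0"
    by (simp add: mult_less_0_iff)
  then show ?thesis
    unfolding u_def[symmetric] v_def[symmetric] by (intro less_quadratic_root) simp_all
qed

lemma quadratic_root_reciprocal_bound:
  fixes a b c r S :: real
  assumes "a > 0" "c > 0" "r > 0" "S\<^sup>2 = b\<^sup>2 + a * c" "a * r < b + S"
  shows "S - b < c / r"
proof (cases "S \<le> b")
  case True
  moreover have "c / r > 0"
    using assms(2,3) by simp
  ultimately show ?thesis by linarith
next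
  case False
  then have "(S - b) * (a * r) < (S - b) * (b + S)"
    using assms(5) by (intro mult_strict_left_mono) simp_all
  also have "\<dots> = a * c"
    using assms(4) by (simp add: algebra_simps power2_eq_square)
  finally have "a * ((S - b) * r) < a * c"
    by (simp add: mult_ac)
  then have "(S - b) * r < c"
    using assms(1) by simp
  then show ?thesis
    using assms(3) by (simp add: field_simps)
qed

lemma oblate_ratio_Suc_greater:
  fixes m k :: nat and x :: real
  defines "S \<equiv> sqrt ((real (m + k + 1) * x)\<^sup>2 + (real k + 1) * (2 * real m + real k + 1))"
  assumes "x > 0" and "even k"
  shows "(real (m + k + 2) * x + S) / (real k + 2)
     < poly (oblate_poly m (Suc (Suc k))) x / poly (oblate_poly m (Suc k)) x"
proof -
  define u where "u = poly (oblate_poly m (Suc k)) x"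
  define v where "v = poly (oblate_poly m k) x"
  have "u > 0" "v > 0"
    unfolding u_def v_def using assms(2) by (simp_all add: oblate_poly_pos)
  have "u / v < (real (m + k + 1) * x + S) / (real k + 1)"
    unfolding S_def u_def v_def using assms(2,3) by (rule oblate_ratio_less_root)
  then have "(real k + 1) * (u / v) < real (m + k + 1) * x + S"
    by (simp add: field_simps)
  then have "S - real (m + k + 1) * x < (2 * real m + real k + 1) / (u / v)"
    using \<open>u > 0\<close> \<open>v > 0\<close> unfolding S_def
    by (intro quadratic_root_reciprocal_bound) simp_all
  then have "real (m + k + 2) * x + S < (2 * m + 2 * k + 3) * x + (2 * m + k + 1) * v / u"
    by (simp add: algebra_simps)
  also have "\<dots> = (real k + 2) * (poly (oblate_poly m (Suc (Suc k))) x / u)"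
    using \<open>u > 0\<close> poly_oblate_poly_recurrence[where k=k and m=m and x=x]
    by (simp add: u_def v_def field_simps)
  finally show ?thesis
    unfolding u_def by (simp add: field_simps)
qed

lemma oblate_turan_bound:
  assumes "x > 0" and "even k"
  shows "(poly (oblate_poly m (Suc k)) x)\<^sup>2 / (poly (oblate_poly m k) x * poly (oblate_poly m (Suc (Suc k))) x)
     < 1 + 1 / real (k + 1)"
proof -
  define u where "u = poly (oblate_poly m (Suc k)) x"
  define v where "v = poly (oblate_poly m k) x"
  define w where "w = poly (oblate_poly m (Suc (Suc k))) x"
  have "u > 0" "v > 0" "w > 0"
    unfolding u_def v_def w_def using assms(1) by (simp_all add: oblate_poly_pos)
  have "(real k + 1) * u\<^sup>2 < 2 * (real m + real k + 1) * x * u * v + (2 * real m + real k + 1) * v\<^sup>2"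
    using oblate_form_neg[OF assms(2) less_imp_le[OF assms(1)], of m]
    by (simp add: oblate_form_def u_def v_def)
  also have "\<dots> \<le> v * ((2 * m + 2 * k + 3) * x * u + (2 * m + k + 1) * v)"
    using assms(1) \<open>u > 0\<close> \<open>v > 0\<close> by (simp add: algebra_simps power2_eq_square)
  also have "\<dots> = (real k + 2) * (v * w)"
    using poly_oblate_poly_recurrence[where k=k and m=m and x=x] by (simp add: v_def u_def w_def algebra_simps)
  finally have "u\<^sup>2 / (v * w) < (real k + 2) / (real k + 1)"
    using \<open>v > 0\<close> \<open>w > 0\<close> by (simp add: field_simps)
  then show ?thesis
    unfolding u_def v_def w_def by (simp add: field_simps)
qed

lemma assoc_legendreP_imag_axis:
  fixes x :: real
  obtains K where "K \<noteq> 0"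
    and "\<And>k. assoc_legendreP (m + k) m (\<i> * of_real x) = K * \<i> ^ k * of_real (poly (oblate_poly m k) x)"
proof
  let ?z = "\<i> * complex_of_real x"
  show "(csqrt (?z + 1) * csqrt (?z - 1)) ^ m * (fact m * lead_coeff (legendre_poly m)) \<noteq> 0"
  proof -
    have "?z + 1 \<noteq> 0" "?z - 1 \<noteq> 0"
      by (auto simp: complex_eq_iff)
    then show ?thesis
      using legendre_poly_nonzero[of m] by simp
  qed
  show "assoc_legendreP (m + k) m ?z
      = (csqrt (?z + 1) * csqrt (?z - 1)) ^ m * (fact m * lead_coeff (legendre_poly m)) * \<i> ^ k
        * of_real (poly (oblate_poly m k) x)" for k
    by (simp add: assoc_legendreP_def higher_pderiv_legendre_poly_imag_axis mult.assoc)
qed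

lemma neg_imag_unit_mult_ratio:
  fixes K :: complex and a b :: real
  assumes "K \<noteq> 0"
  shows "- \<i> * (K * \<i> ^ Suc j * of_real a) / (K * \<i> ^ j * of_real b) = of_real (a / b)"
  using assms by (cases "b = 0") (simp_all add: field_simps)

lemma imag_unit_turan_ratio:
  fixes K :: complex and a b c :: real
  assumes "K \<noteq> 0"
  shows "(K * \<i> ^ Suc j * of_real a)\<^sup>2 / ((K * \<i> ^ j * of_real b) * (K * \<i> ^ Suc (Suc j) * of_real c))
    = of_real (a\<^sup>2 / (b * c))"
  using assms by (cases "b * c = 0") (auto simp: field_simps power2_eq_square)

lemma assoc_legendreP_ratio_odd:
  fixes n m :: nat and x :: real
  assumes "x > 0" and "m < n" and "odd (n - m)"
  shows "let r = - \<i> * assoc_legendreP n m (\<i> * of_real x) / assoc_legendreP (n - 1) m (\<i> * of_real x)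
    in Im r = 0 \<and> 0 < Re r \<and>
      Re r < real n / real (n - m) * (x + sqrt (1 + x\<^sup>2 - (real m)\<^sup>2 / (real n)\<^sup>2))"
proof -
  define k where "k = n - m - 1"
  have n: "n = m + Suc k" and "even k"
    using assms(2,3) by (auto simp: k_def)
  obtain K where "K \<noteq> 0"
    and P: "\<And>k. assoc_legendreP (m + k) m (\<i> * of_real x) = K * \<i> ^ k * of_real (poly (oblate_poly m k) x)"
    using assoc_legendreP_imag_axis[where m=m and x=x] by blast
  have "n - 1 = m + k"
    by (simp add: n)
  then have r: "- \<i> * assoc_legendreP n m (\<i> * of_real x) / assoc_legendreP (n - 1) m (\<i> * of_real x)
      = of_real (poly (oblate_poly m (Suc k)) x / poly (oblate_poly m k) x)"
    using neg_imag_unit_mult_ratio[OF \<open>K \<noteq> 0\<close>] by (simp only: n P)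
  have "poly (oblate_poly m (Suc k)) x / poly (oblate_poly m k) x
      < (real (m + k + 1) * x + real (m + k + 1) * sqrt (1 + x\<^sup>2 - (real m)\<^sup>2 / (real (m + k + 1))\<^sup>2))
        / (real k + 1)"
    using oblate_ratio_less_root[OF assms(1) \<open>even k\<close>, of m] unfolding sqrt_oblate_discriminant .
  then show ?thesis
    unfolding r Let_def using assms(1) by (simp add: n oblate_poly_pos field_simps)
qed

lemma assoc_legendreP_ratio_even:
  fixes n m :: nat and x :: real
  assumes "x > 0" and "m < n" and "even (n - m)"
  shows "let r = - \<i> * assoc_legendreP n m (\<i> * of_real x) / assoc_legendreP (n - 1) m (\<i> * of_real x)
    in Im r = 0 \<and>
      1 / real (n - m) * (real n * x + real (n - 1) * sqrt (1 + x\<^sup>2 - (real m)\<^sup>2 / (real (n - 1))\<^sup>2))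
        < Re r"
proof -
  define k where "k = n - m - 2"
  have "n - m \<noteq> 1"
    using assms(3) odd_one by metis
  then have n: "n = m + Suc (Suc k)"
    using assms(2) unfolding k_def by arith
  with assms(3) have "even k" by simp
  obtain K where "K \<noteq> 0"
    and P: "\<And>k. assoc_legendreP (m + k) m (\<i> * of_real x) = K * \<i> ^ k * of_real (poly (oblate_poly m k) x)"
    using assoc_legendreP_imag_axis[where m=m and x=x] by blast
  have "n - 1 = m + Suc k"
    by (simp add: n)
  then have r: "- \<i> * assoc_legendreP n m (\<i> * of_real x) / assoc_legendreP (n - 1) m (\<i> * of_real x)
      = of_real (poly (oblate_poly m (Suc (Suc k))) x / poly (oblate_poly m (Suc k)) x)"
    using neg_imag_unit_mult_ratio[OF \<open>K \<noteq> 0\<close>] by (simp only: n P)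
  have "(real (m + k + 2) * x + real (m + k + 1) * sqrt (1 + x\<^sup>2 - (real m)\<^sup>2 / (real (m + k + 1))\<^sup>2))
      / (real k + 2) < poly (oblate_poly m (Suc (Suc k))) x / poly (oblate_poly m (Suc k)) x"
    using oblate_ratio_Suc_greater[OF assms(1) \<open>even k\<close>, of m] unfolding sqrt_oblate_discriminant .
  then show ?thesis
    unfolding r Let_def by (simp add: n add.commute)
qed

lemma assoc_legendreP_turan_odd:
  fixes n m :: nat and x :: real
  assumes "x > 0" and "m < n" and "odd (n - m)"
  shows "let q = assoc_legendreP n m (\<i> * of_real x) ^ 2 /
      (assoc_legendreP (n - 1) m (\<i> * of_real x) * assoc_legendreP (n + 1) m (\<i> * of_real x))
    in Im q = 0 \<and> Re q < 1 + 1 / real (n - m)"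
proof -
  define k where "k = n - m - 1"
  have n: "n = m + Suc k" and "even k"
    using assms(2,3) by (auto simp: k_def)
  obtain K where "K \<noteq> 0"
    and P: "\<And>k. assoc_legendreP (m + k) m (\<i> * of_real x) = K * \<i> ^ k * of_real (poly (oblate_poly m k) x)"
    using assoc_legendreP_imag_axis[where m=m and x=x] by blast
  have "n - 1 = m + k" "n + 1 = m + Suc (Suc k)"
    by (simp_all add: n)
  then have q: "assoc_legendreP n m (\<i> * of_real x) ^ 2 /
      (assoc_legendreP (n - 1) m (\<i> * of_real x) * assoc_legendreP (n + 1) m (\<i> * of_real x))
      = of_real ((poly (oblate_poly m (Suc k)) x)\<^sup>2
          / (poly (oblate_poly m k) x * poly (oblate_poly m (Suc (Suc k))) x))"
    using imag_unit_turan_ratio[OF \<open>K \<noteq> 0\<close>] by (simp only: P n)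
  show ?thesis
    using oblate_turan_bound[OF assms(1) \<open>even k\<close>, of m]
    unfolding q Let_def by (simp add: n)
qed

theorem theorem17:
  fixes n m :: nat and x :: real
  assumes "x > 0" and "m < n"
  shows "(odd (n - m) \<longrightarrow>
            (let r = - \<i> * assoc_legendreP n m (\<i> * of_real x) / assoc_legendreP (n - 1) m (\<i> * of_real x)
             in Im r = 0 \<and> 0 < Re r \<and>
                Re r < real n / real (n - m) * (x + sqrt (1 + x\<^sup>2 - (real m)\<^sup>2 / (real n)\<^sup>2))))
       \<and> (even (n - m) \<longrightarrow>
            (let r = - \<i> * assoc_legendreP n m (\<i> * of_real x) / assoc_legendreP (n - 1) m (\<i> * of_real x)
             in Im r = 0 \<and>
                1 / real (n - m) * (real n * x + real (n - 1) * sqrt (1 + x\<^sup>2 - (real m)\<^sup>2 / (real (n - 1))\<^sup>2)) < Re r))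
       \<and> (odd (n - m) \<longrightarrow>
            (let q = assoc_legendreP n m (\<i> * of_real x) ^ 2 /
                     (assoc_legendreP (n - 1) m (\<i> * of_real x) * assoc_legendreP (n + 1) m (\<i> * of_real x))
             in Im q = 0 \<and> Re q < 1 + 1 / real (n - m)))"
  using assoc_legendreP_ratio_odd[OF assms] assoc_legendreP_ratio_even[OF assms]
    assoc_legendreP_turan_odd[OF assms] by blast

end
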